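(* Let $G=(I\cup C,E)$ be a split graph whose clique vertices are labelled $1,\dots,k$ so that conditions (i)–(iii) below hold, and let $w$ be the word constructed below. If $x,y\in V=I\cup C$ are adjacent in $G$, then $x$ and $y$ alternate in $w$.
   Context: Words: a word over a finite set $X$ is a finite sequence of elements of $X$; for a word $u$ and $S\subseteq X$, $u|_S$ is the subsequence of $u$ consisting of all occurrences of letters of $S$; $u^R$ is the reversal of $u$. Two letters $x,y$ alternate in $u$ if $u|_{\{x,y\}}$ is of the form $xyxy\cdots$ or $yxyx\cdots$ (of even or odd length); otherwise they do not alternate. For integers $a\le b$, $[a,b]=\{a,a+1,\dots,b\}$. Setting: $G=(I\cup C,E)$ is a split graph: $C$ induces a clique, $I$ induces an independent set, and $C$ is inclusion-wise maximal, i.e. no vertex of $I$ is adjacent to all vertices of $C$. The vertices of $C$ are labelled by $1,\dots,k$ where $k=|C|$, and for all $a,b\in I$: (i) either $N(a)=[1,m]\cup[n,k]$ for some $m<n$, or $N(a)=[l,r]$ for some $l\le r$; (ii) if $N(a)=[1,m]\cup[n,k]$ ($m<n$) and $N(b)=[l,r]$ ($l\le r$), then $l>m$ or $r<n$; (iii) if $N(a)=[1,m]\cup[n,k]$ and $N(b)=[1,m']\cup[n',k]$ ($m<n$, $m'<n'$), then $m'<n$ and $m<n'$. Let $B$ be the set of $a\in I$ whose neighbourhood is an integer interval $[l_a,r_a]$, and $A=I\setminus B$; for $a\in A$ write $N(a)=[1,m_a]\cup[n_a,k]$ with $m_a<n_a$. Construction of $w$: start with $p_1=p_2=p_3=12\cdots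 k$. Process the vertices of $I$ one at a time in an arbitrary fixed order; "replace $y$ in $p$ by $yx$" (resp. $xy$) means replacing the unique occurrence of the letter $y$ in $p$ by the two letters $yx$ (resp. $xy$). For $a\in A$: replace $m_a$ in $p_1$ by $m_a a$, and replace $n_a$ in $p_2$ by $a n_a$. For $a\in B$: replace $l_a$ in $p_1$ by $a l_a$, and replace $r_a$ in $p_2$ by $r_a a$. After all vertices of $I$ are processed, let $d=\max(\{1\}\cup\{m_a: a\in A\})$ and replace the letter $d$ in $p_3$ by the word $d\,(p_1|_A)^R$. Finally set $w=p_1\,(p_1|_B)^R\,p_2\,p_3$ (a $3$-uniform word over $V$). *)

theory Defs
  imports Main
begin

definition alternate :: "'v list \<Rightarrow> 'v \<Rightarrow> 'v \<Rightarrow> bool" where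
  "alternate u x y \<longleftrightarrow>
     (let v = filter (\<lambda>z. z = x \<or> z = y) u in
        (\<forall>i<length v. v ! i = (if even i then x else y)) \<or>
        (\<forall>i<length v. v ! i = (if even i then y else x)))"

definition replace_letter :: "'v \<Rightarrow> 'v list \<Rightarrow> 'v list \<Rightarrow> 'v list" where
  "replace_letter y s p = concat (map (\<lambda>z. if z = y then s else [z]) p)"

definition split_graph :: "'v set \<Rightarrow> 'v set \<Rightarrow> ('v \<Rightarrow> 'v \<Rightarrow> bool) \<Rightarrow> bool" where
  "split_graph I C E \<longleftrightarrow>
     I \<inter> C = {} \<and>
     (\<forall>x y. E x y \<longrightarrow> E y x) \<and> (\<forall>x. \<not> E x x) \<and>
     (\<forall>x y. E x y \<longrightarrow> x \<in> I \<union> C \<and> y \<in> I \<union> C) \<and>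
     (\<forall>x\<in>C. \<forall>y\<in>C. x \<noteq> y \<longrightarrow> E x y) \<and>
     (\<forall>x\<in>I. \<forall>y\<in>I. \<not> E x y)"

definition nbr_idx :: "('v \<Rightarrow> 'v \<Rightarrow> bool) \<Rightarrow> (nat \<Rightarrow> 'v) \<Rightarrow> nat \<Rightarrow> 'v \<Rightarrow> nat set" where
  "nbr_idx E lab k a = {i \<in> {1..k}. E a (lab i)}"

definition Bset :: "'v set \<Rightarrow> ('v \<Rightarrow> 'v \<Rightarrow> bool) \<Rightarrow> (nat \<Rightarrow> 'v) \<Rightarrow> nat \<Rightarrow> 'v set" where
  "Bset I E lab k = {a \<in> I. \<exists>l r. l \<le> r \<and> nbr_idx E lab k a = {l..r}}"

definition Aset :: "'v set \<Rightarrow> ('v \<Rightarrow> 'v \<Rightarrow> bool) \<Rightarrow> (nat \<Rightarrow> 'v) \<Rightarrow> nat \<Rightarrow> 'v set" where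
  "Aset I E lab k = I - Bset I E lab k"

definition l_of :: "('v \<Rightarrow> 'v \<Rightarrow> bool) \<Rightarrow> (nat \<Rightarrow> 'v) \<Rightarrow> nat \<Rightarrow> 'v \<Rightarrow> nat" where
  "l_of E lab k a = (THE l. \<exists>r. l \<le> r \<and> nbr_idx E lab k a = {l..r})"

definition r_of :: "('v \<Rightarrow> 'v \<Rightarrow> bool) \<Rightarrow> (nat \<Rightarrow> 'v) \<Rightarrow> nat \<Rightarrow> 'v \<Rightarrow> nat" where
  "r_of E lab k a = (THE r. \<exists>l. l \<le> r \<and> nbr_idx E lab k a = {l..r})"

definition m_of :: "('v \<Rightarrow> 'v \<Rightarrow> bool) \<Rightarrow> (nat \<Rightarrow> 'v) \<Rightarrow> nat \<Rightarrow> 'v \<Rightarrow> nat" where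
  "m_of E lab k a = (THE m. \<exists>n. m < n \<and> nbr_idx E lab k a = {1..m} \<union> {n..k})"

definition n_of :: "('v \<Rightarrow> 'v \<Rightarrow> bool) \<Rightarrow> (nat \<Rightarrow> 'v) \<Rightarrow> nat \<Rightarrow> 'v \<Rightarrow> nat" where
  "n_of E lab k a = (THE n. \<exists>m. m < n \<and> nbr_idx E lab k a = {1..m} \<union> {n..k})"

definition process_vertex ::
  "'v set \<Rightarrow> ('v \<Rightarrow> 'v \<Rightarrow> bool) \<Rightarrow> (nat \<Rightarrow> 'v) \<Rightarrow> nat \<Rightarrow> 'v \<Rightarrow> 'v list \<times> 'v list \<Rightarrow> 'v list \<times> 'v list" where
  "process_vertex I E lab k a p =
     (if a \<in> Aset I E lab k then
        (replace_letter (lab (m_of E lab k a)) [lab (m_of E lab k a), a] (fst p),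
         replace_letter (lab (n_of E lab k a)) [a, lab (n_of E lab k a)] (snd p))
      else
        (replace_letter (lab (l_of E lab k a)) [a, lab (l_of E lab k a)] (fst p),
         replace_letter (lab (r_of E lab k a)) [lab (r_of E lab k a), a] (snd p)))"

definition p12 :: "'v set \<Rightarrow> ('v \<Rightarrow> 'v \<Rightarrow> bool) \<Rightarrow> (nat \<Rightarrow> 'v) \<Rightarrow> nat \<Rightarrow> 'v list \<Rightarrow> 'v list \<times> 'v list" where
  "p12 I E lab k ord =
     fold (process_vertex I E lab k) ord (map lab [1..<k+1], map lab [1..<k+1])"

definition d_of :: "'v set \<Rightarrow> ('v \<Rightarrow> 'v \<Rightarrow> bool) \<Rightarrow> (nat \<Rightarrow> 'v) \<Rightarrow> nat \<Rightarrow> nat" where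
  "d_of I E lab k = Max ({1} \<union> m_of E lab k ` Aset I E lab k)"

definition word_w :: "'v set \<Rightarrow> ('v \<Rightarrow> 'v \<Rightarrow> bool) \<Rightarrow> (nat \<Rightarrow> 'v) \<Rightarrow> nat \<Rightarrow> 'v list \<Rightarrow> 'v list" where
  "word_w I E lab k ord =
     (let p1 = fst (p12 I E lab k ord);
          p2 = snd (p12 I E lab k ord);
          A = Aset I E lab k; B = Bset I E lab k;
          d = d_of I E lab k;
          p3 = replace_letter (lab d) (lab d # rev (filter (\<lambda>z. z \<in> A) p1)) (map lab [1..<k+1])
      in p1 @ rev (filter (\<lambda>z. z \<in> B) p1) @ p2 @ p3)"

end

theory Submission
  imports Defs
begin

text \<open>Restricting w to two letters restricts each of its four blocks separately.
  Each of p1, p2 and p3 contains every clique vertex exactly once, in increasing order, so two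
  clique vertices i < j give i j i j i j. A vertex a of I occurs in p1 and in p2 right next to its
  anchor (m a and n a, resp. l a and r a), in the reversed block iff a \<in> B, and in
  p3, after the letter d, iff a \<in> A. Comparing a neighbour c with these anchors yields
  a c a c a c or c a c a c a; for a \<in> A this needs m a \<le> d < n a, which is where
  condition (iii) enters.\<close>

lemma replace_letter_Cons [simp]:
  "replace_letter y s (z # p) = (if z = y then s else [z]) @ replace_letter y s p"
  by (simp add: replace_letter_def)

lemma replace_letter_Nil [simp]: "replace_letter y s [] = []"
  by (simp add: replace_letter_def)

lemma set_replace_letter: "set (replace_letter y s p) \<subseteq> set p \<union> set s"
  by (induction p) auto

lemma filter_replace_letter:
  "P y \<Longrightarrow> filter P (replace_letter y s p) = replace_letter y (filter P s) (filter P p)"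
  by (induction p) auto

lemma filter_replace_letter_invisible:
  "filter P s = filter P [y] \<Longrightarrow> filter P (replace_letter y s p) = filter P p"
  by (induction p) auto

lemma filter_rev_filter: "filter Q (rev (filter P p)) = rev (filter P (filter Q p))"
  by (induction p) auto

lemma filter_upt_pair:
  fixes i j :: nat
  assumes "i \<le> j"
  shows "filter (\<lambda>t. t = i \<or> t = j) [lo..<hi] =
    (if lo \<le> i \<and> i < hi then [i] else []) @ (if lo \<le> j \<and> j < hi \<and> i \<noteq> j then [j] else [])"
  using assms by (induction hi) auto

lemma nth_concat_replicate_pair:
  "i < 2 * n \<Longrightarrow> concat (replicate n [x, y]) ! i = (if even i then x else y)"
proof (induction n arbitrary: i)
  case (Suc n)
  then show ?case
    by (cases i; cases "i - 1") (auto simp: nth_Cons')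
qed simp

lemma alternate_sym: "alternate u x y \<longleftrightarrow> alternate u y x"
proof -
  have "(\<lambda>z. z = x \<or> z = y) = (\<lambda>z. z = y \<or> z = x)" by auto
  then show ?thesis unfolding alternate_def Let_def by auto
qed

lemma alternate_if_filter_eq_concat_replicate:
  assumes "filter (\<lambda>z. z = x \<or> z = y) u = concat (replicate n [x, y]) \<or>
    filter (\<lambda>z. z = x \<or> z = y) u = concat (replicate n [y, x])"
  shows "alternate u x y"
proof -
  have "length (concat (replicate n [v, w])) = 2 * n" for v w :: 'a
    by (simp add: length_concat sum_list_replicate)
  with assms show ?thesis
    unfolding alternate_def Let_def by (auto simp: nth_concat_replicate_pair)
qed

definition labels_in_order :: "(nat \<Rightarrow> 'v) \<Rightarrow> nat \<Rightarrow> 'v list \<Rightarrow> bool" where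
  "labels_in_order lab k p \<longleftrightarrow> filter (\<lambda>z. z \<in> lab ` {1..k}) p = map lab [1..<k+1]"

lemma labels_in_order_labels: "labels_in_order lab k (map lab [1..<k+1])"
  unfolding labels_in_order_def by (auto intro: filter_True)

lemma label_in_set_if_labels_in_order:
  assumes "labels_in_order lab k p" "j \<in> {1..k}"
  shows "lab j \<in> set p"
proof -
  have "lab j \<in> set (filter (\<lambda>z. z \<in> lab ` {1..k}) p)"
    using assms unfolding labels_in_order_def by (simp del: upt_Suc)
  then show ?thesis by simp
qed

lemma labels_in_order_filter_pair:
  assumes p: "labels_in_order lab k p" and inj: "inj_on lab {1..k}"
    and ij: "i \<le> j" "i \<in> {1..k}" "j \<in> {1..k}"
  shows "filter (\<lambda>z. z = lab i \<or> z = lab j) p = (if i = j then [lab i] else [lab i, lab j])"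
proof -
  have "filter (\<lambda>z. z = lab i \<or> z = lab j) p =
      filter (\<lambda>z. z = lab i \<or> z = lab j) (filter (\<lambda>z. z \<in> lab ` {1..k}) p)"
    using ij by (auto simp: filter_filter intro: filter_cong)
  also have "\<dots> = map lab (filter (\<lambda>t. lab t = lab i \<or> lab t = lab j) [1..<k+1])"
    using p by (simp add: labels_in_order_def filter_map comp_def)
  also have "filter (\<lambda>t. lab t = lab i \<or> lab t = lab j) [1..<k+1] = filter (\<lambda>t. t = i \<or> t = j) [1..<k+1]"
    using inj ij by (intro filter_cong) (auto dest: inj_onD)
  finally show ?thesis
    using ij by (simp add: filter_upt_pair)
qed

lemma labels_in_order_replace_letter:
  assumes "labels_in_order lab k p" "filter (\<lambda>z. z \<in> lab ` {1..k}) s = [lab j]" "j \<in> {1..k}"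
  shows "labels_in_order lab k (replace_letter (lab j) s p)"
  using assms by (simp add: labels_in_order_def filter_replace_letter_invisible)

lemma filter_replace_label:
  assumes p: "labels_in_order lab k p" and inj: "inj_on lab {1..k}" and a: "a \<notin> set p"
    and j: "j \<in> {1..k}" and c: "c \<in> {1..k}"
  shows "filter (\<lambda>z. z = a \<or> z = lab c) (replace_letter (lab j) s p) =
    (if c < j then [lab c] else []) @ filter (\<lambda>z. z = a \<or> z = lab c) s @ (if j < c then [lab c] else [])"
proof -
  txt \<open>Projecting onto Q' first leaves at most the two clique letters lab c and lab j of p.\<close>
  define Q where "Q = (\<lambda>z. z = a \<or> z = lab c)"
  define Q' where "Q' = (\<lambda>z. z = a \<or> z = lab c \<or> z = lab j)"
  have "filter Q (replace_letter (lab j) s p) = filter Q (filter Q' (replace_letter (lab j) s p))"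
    unfolding Q_def Q'_def by (auto simp: filter_filter intro: filter_cong)
  also have "\<dots> = filter Q (replace_letter (lab j) (filter Q' s) (filter Q' p))"
    unfolding Q'_def by (simp add: filter_replace_letter)
  also have "filter Q' p = filter (\<lambda>z. z = lab (min c j) \<or> z = lab (max c j)) p"
    unfolding Q'_def using a by (intro filter_cong) (auto simp: min_def max_def)
  also have "\<dots> = (if c = j then [lab j] else [lab (min c j), lab (max c j)])"
    using labels_in_order_filter_pair[OF p inj] c j by (auto simp: min_def max_def)
  finally show ?thesis
    using inj c j unfolding Q_def Q'_def
    by (auto simp: filter_filter min_def max_def dest: inj_onD intro!: filter_cong)
qed

definition insert_at :: "(nat \<Rightarrow> 'v) \<Rightarrow> nat \<Rightarrow> bool \<Rightarrow> 'v \<Rightarrow> 'v list \<Rightarrow> 'v list" where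
  "insert_at lab j before a = replace_letter (lab j) (if before then [a, lab j] else [lab j, a])"

lemma set_insert_at: "set (insert_at lab j before a p) \<subseteq> insert a (insert (lab j) (set p))"
  unfolding insert_at_def
  using set_replace_letter[of "lab j" "[a, lab j]" p] set_replace_letter[of "lab j" "[lab j, a]" p]
  by auto

lemma filter_insert_at_self:
  assumes p: "labels_in_order lab k p" and inj: "inj_on lab {1..k}" and a: "a \<notin> set p"
    and j: "j \<in> {1..k}" and c: "c \<in> {1..k}"
  shows "filter (\<lambda>z. z = a \<or> z = lab c) (insert_at lab j before a p) =
    (if c < j \<or> c = j \<and> \<not> before then [lab c, a] else [a, lab c])"
proof -
  have "a \<noteq> lab j" "a \<noteq> lab c"
    using a label_in_set_if_labels_in_order[OF p] j c by auto
  moreover have "lab j = lab c \<longleftrightarrow> j = c"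
    using inj j c by (auto dest: inj_onD)
  ultimately show ?thesis
    using filter_replace_label[OF p inj a j c]
    unfolding insert_at_def by auto
qed

lemma filter_insert_at_other:
  "b \<noteq> a \<Longrightarrow> b \<noteq> lab c \<Longrightarrow>
   filter (\<lambda>z. z = a \<or> z = lab c) (insert_at lab j before b p) = filter (\<lambda>z. z = a \<or> z = lab c) p"
  unfolding insert_at_def by (rule filter_replace_letter_invisible) auto

lemma fold_insert_at:
  fixes anchor :: "'v \<Rightarrow> nat" and before :: "'v \<Rightarrow> bool"
  assumes inj: "inj_on lab {1..k}" and xs: "distinct xs" "set xs \<inter> lab ` {1..k} = {}"
    and anchor: "\<forall>a\<in>set xs. anchor a \<in> {1..k}"
  defines "p \<equiv> fold (\<lambda>a. insert_at lab (anchor a) (before a) a) xs (map lab [1..<k+1])"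
  shows "labels_in_order lab k p \<and> set p \<subseteq> lab ` {1..k} \<union> set xs \<and>
    (\<forall>a\<in>set xs. \<forall>c\<in>{1..k}. filter (\<lambda>z. z = a \<or> z = lab c) p =
       (if c < anchor a \<or> c = anchor a \<and> \<not> before a then [lab c, a] else [a, lab c]))"
  using xs anchor unfolding p_def
proof (induction xs rule: rev_induct)
  case Nil
  show ?case using labels_in_order_labels[of lab k] by (auto simp del: upt_Suc)
next
  case (snoc b xs)
  define q where "q = fold (\<lambda>a. insert_at lab (anchor a) (before a) a) xs (map lab [1..<k+1])"
  have q: "labels_in_order lab k q" "set q \<subseteq> lab ` {1..k} \<union> set xs"
    and old: "\<And>a c. a \<in> set xs \<Longrightarrow> c \<in> {1..k} \<Longrightarrow> filter (\<lambda>z. z = a \<or> z = lab c) q =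
       (if c < anchor a \<or> c = anchor a \<and> \<not> before a then [lab c, a] else [a, lab c])"
    using snoc unfolding q_def by auto
  have b: "b \<notin> set q" "b \<notin> lab ` {1..k}" and j: "anchor b \<in> {1..k}"
    using q(2) snoc.prems by auto
  have "labels_in_order lab k (insert_at lab (anchor b) (before b) b q)"
    unfolding insert_at_def using q(1) b(2) j by (intro labels_in_order_replace_letter) auto
  moreover have "set (insert_at lab (anchor b) (before b) b q) \<subseteq> lab ` {1..k} \<union> set (xs @ [b])"
    using set_insert_at[of lab "anchor b" "before b" b q] q(2) j by auto
  moreover have "filter (\<lambda>z. z = a \<or> z = lab c) (insert_at lab (anchor b) (before b) b q) =
       (if c < anchor a \<or> c = anchor a \<and> \<not> before a then [lab c, a] else [a, lab c])"
    if "a \<in> set (xs @ [b])" "c \<in> {1..k}" for a c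
  proof (cases "a = b")
    case True
    then show ?thesis using filter_insert_at_self[OF q(1) inj b(1) j] that by simp
  next
    case False
    then have "a \<in> set xs" "b \<noteq> lab c" using that b(2) by auto
    with False show ?thesis
      using filter_insert_at_other[of b a lab c "anchor b" "before b" q] old that(2) by simp
  qed
  ultimately show ?case unfolding q_def by simp
qed

lemma fold_pair:
  "fold (\<lambda>a pq. (f a (fst pq), g a (snd pq))) xs (p, q) = (fold f xs p, fold g xs q)"
  by (induction xs arbitrary: p q) auto

lemma l_of_r_of:
  assumes "nbr_idx E lab k a = {l..r}" "l \<le> r"
  shows "l_of E lab k a = l" "r_of E lab k a = r"
  using assms unfolding l_of_def r_of_def by (auto intro!: the_equality simp: Icc_eq_Icc)

lemma two_intervals_eq:
  fixes m n m' n' k :: nat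
  assumes eq: "{1..m} \<union> {n..k} = {1..m'} \<union> {n'..k}"
    and "1 \<le> m" "m + 1 < n" "n \<le> k" "m' < n'"
  shows "m' = m \<and> n' = n"
proof -
  have mem: "\<And>x. (1 \<le> x \<and> x \<le> m \<or> n \<le> x \<and> x \<le> k) \<longleftrightarrow> (1 \<le> x \<and> x \<le> m' \<or> n' \<le> x \<and> x \<le> k)"
    using eq by (auto simp: set_eq_iff)
  have "m' = m"
    using mem[of "m + 1"] mem[of "m' + 1"] assms(2-5) by (cases "m' < m") auto
  then show ?thesis
    using mem[of n] mem[of n'] assms(2-5) by auto
qed

lemma m_of_n_of:
  assumes nbr: "nbr_idx E lab k a = {1..m} \<union> {n..k}" and mn: "1 \<le> m" "m + 1 < n" "n \<le> k"
  shows "m_of E lab k a = m" "n_of E lab k a = n"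
proof -
  have unique: "m' = m \<and> n' = n" if "m' < n'" "nbr_idx E lab k a = {1..m'} \<union> {n'..k}" for m' n'
    using two_intervals_eq[of m n k m' n'] nbr mn that by simp
  have "m < n" using mn by simp
  then show "m_of E lab k a = m" "n_of E lab k a = n"
    unfolding m_of_def n_of_def using nbr unique by (blast intro: the_equality)+
qed

locale labelled_split_graph =
  fixes I C :: "'v set" and E :: "'v \<Rightarrow> 'v \<Rightarrow> bool" and lab :: "nat \<Rightarrow> 'v"
    and k :: nat and ord :: "'v list"
  assumes split: "split_graph I C E"
    and labelling: "bij_betw lab {1..k} C"
    and nonempty_nbr: "\<forall>a\<in>I. nbr_idx E lab k a \<noteq> {}"
    and cond_i: "\<forall>a\<in>I. (\<exists>m n. m < n \<and> nbr_idx E lab k a = {1..m} \<union> {n..k})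
                      \<or> (\<exists>l r. l \<le> r \<and> nbr_idx E lab k a = {l..r})"
    and cond_iii: "\<forall>a\<in>Aset I E lab k. \<forall>b\<in>Aset I E lab k. \<forall>m n m' n'.
                    m < n \<longrightarrow> nbr_idx E lab k a = {1..m} \<union> {n..k} \<longrightarrow>
                    m' < n' \<longrightarrow> nbr_idx E lab k b = {1..m'} \<union> {n'..k} \<longrightarrow> m' < n \<and> m < n'"
    and order: "distinct ord" "set ord = I"
begin

abbreviation "A \<equiv> Aset I E lab k"
abbreviation "B \<equiv> Bset I E lab k"
abbreviation "d \<equiv> d_of I E lab k"
abbreviation "L \<equiv> map lab [1..<k+1]"

lemma inj_lab: "inj_on lab {1..k}"
  using labelling by (simp add: bij_betw_def)

lemma labels_eq: "lab ` {1..k} = C"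
  using labelling by (simp add: bij_betw_def)

lemma independent_disjoint_labels: "I \<inter> lab ` {1..k} = {}"
  using split labels_eq by (simp add: split_graph_def)

lemma Aset_Bset_subset: "A \<subseteq> I" "B \<subseteq> I"
  unfolding Aset_def Bset_def by auto

lemma Aset_params:
  assumes "a \<in> A"
  shows "nbr_idx E lab k a = {1..m_of E lab k a} \<union> {n_of E lab k a..k}
    \<and> 1 \<le> m_of E lab k a \<and> m_of E lab k a < n_of E lab k a \<and> n_of E lab k a \<le> k"
proof -
  define N where "N = nbr_idx E lab k a"
  have aI: "a \<in> I" and not_interval: "\<And>l r. l \<le> r \<Longrightarrow> N \<noteq> {l..r}"
    using assms unfolding Aset_def Bset_def N_def by auto
  moreover have "(\<exists>m n. m < n \<and> N = {1..m} \<union> {n..k}) \<or> (\<exists>l r. l \<le> r \<and> N = {l..r})"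
    using bspec[OF cond_i aI] unfolding N_def .
  ultimately obtain m n where mn: "m < n" "N = {1..m} \<union> {n..k}"
    by blast
  have "N \<noteq> {}" using nonempty_nbr aI unfolding N_def by blast
  have "1 \<le> m"
  proof (rule ccontr)
    assume "\<not> 1 \<le> m"
    then have "N = {n..k}" using mn by simp
    then show False using not_interval[of n k] \<open>N \<noteq> {}\<close> by (cases "n \<le> k") simp_all
  qed
  moreover have "n \<le> k"
  proof (rule ccontr)
    assume "\<not> n \<le> k"
    then have "N = {1..m}" using mn by simp
    then show False using not_interval[of 1 m] \<open>1 \<le> m\<close> by blast
  qed
  moreover have "m + 1 < n"
  proof (rule ccontr)
    assume "\<not> m + 1 < n"
    then have "n = m + 1" using mn(1) by simp
    then have "N = {1..m} \<union> {m + 1..k}" using mn(2) by simp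
    also have "\<dots> = {1..k}" using \<open>1 \<le> m\<close> \<open>n \<le> k\<close> \<open>\<not> m + 1 < n\<close> mn(1) by auto
    finally show False using not_interval[of 1 k] \<open>n \<le> k\<close> mn(1) by simp
  qed
  ultimately show ?thesis
    using mn m_of_n_of[of E lab k a m n] unfolding N_def by simp
qed

lemma Bset_params:
  assumes "a \<in> B"
  shows "nbr_idx E lab k a = {l_of E lab k a..r_of E lab k a}
    \<and> 1 \<le> l_of E lab k a \<and> l_of E lab k a \<le> r_of E lab k a \<and> r_of E lab k a \<le> k"
proof -
  obtain l r where lr: "l \<le> r" "nbr_idx E lab k a = {l..r}"
    using assms unfolding Bset_def by blast
  moreover have "l \<in> nbr_idx E lab k a" "r \<in> nbr_idx E lab k a"
    using lr by auto
  then have "1 \<le> l" "r \<le> k"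
    unfolding nbr_idx_def by auto
  ultimately show ?thesis
    using l_of_r_of[OF lr(2,1)] by simp
qed

lemma finite_Aset: "finite A"
  using finite_subset[OF Aset_Bset_subset(1)] order(2) by auto

lemma d_of_ge: "a \<in> A \<Longrightarrow> m_of E lab k a \<le> d"
  unfolding d_of_def using finite_Aset by (intro Max_ge) auto

lemma d_of_cases: "d = 1 \<or> (\<exists>b\<in>A. d = m_of E lab k b)"
proof -
  have "d \<in> {1} \<union> m_of E lab k ` A"
    unfolding d_of_def using finite_Aset by (intro Max_in) auto
  then show ?thesis by auto
qed

lemma d_of_range:
  assumes "1 \<le> k" shows "d \<in> {1..k}"
proof (cases "d = 1")
  case False
  then obtain b where "b \<in> A" "d = m_of E lab k b" using d_of_cases by blast
  then show ?thesis using Aset_params[of b] by simp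
qed (use assms in simp)

lemma d_of_less:
  assumes a: "a \<in> A" shows "d < n_of E lab k a"
proof (cases "d = 1")
  case True
  then show ?thesis using Aset_params[OF a] by simp
next
  case False
  then obtain b where b: "b \<in> A" "d = m_of E lab k b" using d_of_cases by blast
  have "m_of E lab k b < n_of E lab k a"
    using cond_iii[rule_format, OF a b(1), of "m_of E lab k a" "n_of E lab k a"
        "m_of E lab k b" "n_of E lab k b"] Aset_params[OF a] Aset_params[OF b(1)]
    by simp
  then show ?thesis using b(2) by simp
qed

abbreviation "p1 \<equiv> fst (p12 I E lab k ord)"
abbreviation "p2 \<equiv> snd (p12 I E lab k ord)"
abbreviation "p3 \<equiv> replace_letter (lab d) (lab d # rev (filter (\<lambda>z. z \<in> A) p1)) L"

lemma p12_eq_folds: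
  "p12 I E lab k ord =
    (fold (\<lambda>a. insert_at lab (if a \<in> A then m_of E lab k a else l_of E lab k a) (a \<notin> A) a) ord L,
     fold (\<lambda>a. insert_at lab (if a \<in> A then n_of E lab k a else r_of E lab k a) (a \<in> A) a) ord L)"
proof -
  have step: "process_vertex I E lab k = (\<lambda>a pq.
      (insert_at lab (if a \<in> A then m_of E lab k a else l_of E lab k a) (a \<notin> A) a (fst pq),
       insert_at lab (if a \<in> A then n_of E lab k a else r_of E lab k a) (a \<in> A) a (snd pq)))"
    by (auto simp: fun_eq_iff process_vertex_def insert_at_def)
  show ?thesis
    unfolding p12_def step by (rule fold_pair)
qed

lemma anchors_in_range:
  assumes "a \<in> I"
  shows "(if a \<in> A then m_of E lab k a else l_of E lab k a) \<in> {1..k}"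
    and "(if a \<in> A then n_of E lab k a else r_of E lab k a) \<in> {1..k}"
proof -
  have "a \<in> B" if "a \<notin> A" using assms that unfolding Aset_def by blast
  then show "(if a \<in> A then m_of E lab k a else l_of E lab k a) \<in> {1..k}"
    and "(if a \<in> A then n_of E lab k a else r_of E lab k a) \<in> {1..k}"
    using Aset_params[of a] Bset_params[of a] by auto
qed

lemma labels_in_order_p1: "labels_in_order lab k p1"
  using fold_insert_at[OF inj_lab order(1), of "\<lambda>a. if a \<in> A then m_of E lab k a else l_of E lab k a"
      "\<lambda>a. a \<notin> A"] independent_disjoint_labels anchors_in_range(1)
  unfolding p12_eq_folds order(2) by auto

lemma filter_pair_p1:
  "a \<in> I \<Longrightarrow> c \<in> {1..k} \<Longrightarrow> filter (\<lambda>z. z = a \<or> z = lab c) p1 =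
    (if a \<in> A then (if c \<le> m_of E lab k a then [lab c, a] else [a, lab c])
     else (if c < l_of E lab k a then [lab c, a] else [a, lab c]))"
  using fold_insert_at[OF inj_lab order(1), of "\<lambda>a. if a \<in> A then m_of E lab k a else l_of E lab k a"
      "\<lambda>a. a \<notin> A"] independent_disjoint_labels anchors_in_range(1)
  unfolding p12_eq_folds order(2) by auto

lemma labels_in_order_p2: "labels_in_order lab k p2"
  using fold_insert_at[OF inj_lab order(1), of "\<lambda>a. if a \<in> A then n_of E lab k a else r_of E lab k a"
      "\<lambda>a. a \<in> A"] independent_disjoint_labels anchors_in_range(2)
  unfolding p12_eq_folds order(2) by auto

lemma filter_pair_p2:
  "a \<in> I \<Longrightarrow> c \<in> {1..k} \<Longrightarrow> filter (\<lambda>z. z = a \<or> z = lab c) p2 =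
    (if a \<in> A then (if c < n_of E lab k a then [lab c, a] else [a, lab c])
     else (if c \<le> r_of E lab k a then [lab c, a] else [a, lab c]))"
  using fold_insert_at[OF inj_lab order(1), of "\<lambda>a. if a \<in> A then n_of E lab k a else r_of E lab k a"
      "\<lambda>a. a \<in> A"] independent_disjoint_labels anchors_in_range(2)
  unfolding p12_eq_folds order(2) by auto

lemma filter_word_w:
  "filter P (word_w I E lab k ord) =
    filter P p1 @ rev (filter (\<lambda>z. z \<in> B) (filter P p1)) @ filter P p2 @ filter P p3"
  unfolding word_w_def Let_def by (simp add: filter_rev_filter)

lemma labels_in_order_p3:
  assumes "1 \<le> k" shows "labels_in_order lab k p3"
proof -
  have "filter (\<lambda>z. z \<in> lab ` {1..k}) (rev (filter (\<lambda>z. z \<in> A) p1)) = []"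
    using Aset_Bset_subset(1) independent_disjoint_labels by (auto simp: filter_empty_conv)
  then have "filter (\<lambda>z. z \<in> lab ` {1..k}) (lab d # rev (filter (\<lambda>z. z \<in> A) p1)) = [lab d]"
    using d_of_range[OF assms] by simp
  from labels_in_order_replace_letter[OF labels_in_order_labels this d_of_range[OF assms]]
  show ?thesis .
qed

lemma alternate_labels:
  assumes ij: "i \<in> {1..k}" "j \<in> {1..k}" "i < j"
  shows "alternate (word_w I E lab k ord) (lab i) (lab j)"
proof -
  have pair: "filter (\<lambda>z. z = lab i \<or> z = lab j) p = [lab i, lab j]" if "labels_in_order lab k p" for p
    using labels_in_order_filter_pair[OF that inj_lab] ij by simp
  have "1 \<le> k" "lab i \<notin> B" "lab j \<notin> B"
    using ij Aset_Bset_subset(2) independent_disjoint_labels by auto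
  then have "filter (\<lambda>z. z = lab i \<or> z = lab j) (word_w I E lab k ord) =
      concat (replicate 3 [lab i, lab j])"
    unfolding filter_word_w pair[OF labels_in_order_p1] pair[OF labels_in_order_p2]
      pair[OF labels_in_order_p3[OF \<open>1 \<le> k\<close>]] by (simp add: numeral_3_eq_3)
  then show ?thesis by (intro alternate_if_filter_eq_concat_replicate disjI1)
qed

lemma alternate_independent_label:
  assumes a: "a \<in> I" and c: "c \<in> nbr_idx E lab k a"
  shows "alternate (word_w I E lab k ord) a (lab c)"
proof -
  define Q where "Q = (\<lambda>z. z = a \<or> z = lab c)"
  have c': "c \<in> {1..k}" using c unfolding nbr_idx_def by simp
  then have d: "d \<in> {1..k}" using d_of_range by simp
  have "a \<notin> lab ` {1..k}" "lab c \<notin> A" "lab c \<notin> B"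
    using a c' Aset_Bset_subset independent_disjoint_labels by auto
  then have "a \<notin> set L" "lab d \<noteq> a" using d by auto
  moreover have "lab d = lab c \<longleftrightarrow> d = c"
    using inj_lab d c' by (auto dest: inj_onD)
  ultimately have "filter Q (lab d # rev (filter (\<lambda>z. z \<in> A) p1)) =
      (if c = d then [lab c] else []) @ rev (filter (\<lambda>z. z \<in> A) (filter Q p1))"
    unfolding Q_def by (auto simp: filter_rev_filter)
  then have p3: "filter Q p3 = (if c < d then [lab c] else []) @ (if c = d then [lab c] else []) @
      rev (filter (\<lambda>z. z \<in> A) (filter Q p1)) @ (if d < c then [lab c] else [])"
    using filter_replace_label[OF labels_in_order_labels inj_lab \<open>a \<notin> set L\<close> d c', folded Q_def]
    by simp
  have "filter Q (word_w I E lab k ord) = concat (replicate 3 [a, lab c]) \<or>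
      filter Q (word_w I E lab k ord) = concat (replicate 3 [lab c, a])"
  proof (cases "a \<in> A")
    case True
    have e1: "filter Q p1 = (if c \<le> m_of E lab k a then [lab c, a] else [a, lab c])"
      and e2: "filter Q p2 = (if c < n_of E lab k a then [lab c, a] else [a, lab c])"
      using filter_pair_p1[OF a c'] filter_pair_p2[OF a c'] True unfolding Q_def by simp_all
    have "c \<le> m_of E lab k a \<or> n_of E lab k a \<le> c" "a \<notin> B"
      using c Aset_params[OF True] True unfolding Aset_def by auto
    then show ?thesis
      using True d_of_ge[OF True] d_of_less[OF True] \<open>lab c \<notin> A\<close> \<open>lab c \<notin> B\<close>
      unfolding filter_word_w p3 e1 e2 by (auto simp: numeral_3_eq_3)
  next
    case False
    have e1: "filter Q p1 = (if c < l_of E lab k a then [lab c, a] else [a, lab c])"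
      and e2: "filter Q p2 = (if c \<le> r_of E lab k a then [lab c, a] else [a, lab c])"
      using filter_pair_p1[OF a c'] filter_pair_p2[OF a c'] False unfolding Q_def by simp_all
    have "a \<in> B" using a False unfolding Aset_def by blast
    then have "l_of E lab k a \<le> c" "c \<le> r_of E lab k a"
      using c Bset_params by auto
    then show ?thesis
      using False \<open>a \<in> B\<close> \<open>lab c \<notin> A\<close> \<open>lab c \<notin> B\<close>
      unfolding filter_word_w p3 e1 e2 by (auto simp: numeral_3_eq_3)
  qed
  then show ?thesis
    unfolding Q_def by (rule alternate_if_filter_eq_concat_replicate)
qed

end

theorem lemma2:
  fixes I C :: "'v set" and E :: "'v \<Rightarrow> 'v \<Rightarrow> bool" and lab :: "nat \<Rightarrow> 'v"
    and k :: nat and ord :: "'v list" and x y :: 'v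
  assumes split: "split_graph I C E"
    and maximal: "\<forall>a\<in>I. \<exists>c\<in>C. \<not> E a c"
    and labelling: "bij_betw lab {1..k} C"
    and nonempty_nbr: "\<forall>a\<in>I. nbr_idx E lab k a \<noteq> {}"
    and cond_i: "\<forall>a\<in>I. (\<exists>m n. m < n \<and> nbr_idx E lab k a = {1..m} \<union> {n..k})
                      \<or> (\<exists>l r. l \<le> r \<and> nbr_idx E lab k a = {l..r})"
    and cond_ii: "\<forall>a\<in>Aset I E lab k. \<forall>b\<in>Bset I E lab k. \<forall>m n l r.
                    m < n \<longrightarrow> nbr_idx E lab k a = {1..m} \<union> {n..k} \<longrightarrow>
                    l \<le> r \<longrightarrow> nbr_idx E lab k b = {l..r} \<longrightarrow> l > m \<or> r < n"
    and cond_iii: "\<forall>a\<in>Aset I E lab k. \<forall>b\<in>Aset I E lab k. \<forall>m n m' n'.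
                    m < n \<longrightarrow> nbr_idx E lab k a = {1..m} \<union> {n..k} \<longrightarrow>
                    m' < n' \<longrightarrow> nbr_idx E lab k b = {1..m'} \<union> {n'..k} \<longrightarrow> m' < n \<and> m < n'"
    and order: "distinct ord" "set ord = I"
    and xV: "x \<in> I \<union> C" and yV: "y \<in> I \<union> C"
    and adj: "E x y"
  shows "alternate (word_w I E lab k ord) x y"
proof -
  interpret labelled_split_graph I C E lab k ord
    using split labelling nonempty_nbr cond_i cond_iii order by unfold_locales
  have "E y x" "x \<noteq> y" "x \<in> I \<longrightarrow> y \<notin> I"
    using split adj unfolding split_graph_def by auto
  consider (independent_label) j where "x \<in> I" "j \<in> {1..k}" "y = lab j"
    | (label_independent) i where "i \<in> {1..k}" "x = lab i" "y \<in> I"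
    | (labels) i j where "i \<in> {1..k}" "x = lab i" "j \<in> {1..k}" "y = lab j"
    using xV yV labels_eq \<open>x \<in> I \<longrightarrow> y \<notin> I\<close> by blast
  then show ?thesis
  proof cases
    case independent_label
    then show ?thesis using adj by (auto simp: nbr_idx_def intro: alternate_independent_label)
  next
    case label_independent
    then have "alternate (word_w I E lab k ord) y (lab i)"
      using \<open>E y x\<close> by (auto simp: nbr_idx_def intro: alternate_independent_label)
    then show ?thesis using label_independent(2) by (simp add: alternate_sym[of _ y])
  next
    case labels
    then have "i < j \<or> j < i" using \<open>x \<noteq> y\<close> by (metis linorder_neqE_nat)
    then show ?thesis
      using labels alternate_labels[of i j] alternate_labels[of j i]
        alternate_sym[of _ "lab i" "lab j"] by auto
  qed
qed

end
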